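(* Let $S=\{s_1,\dots,s_p\}$ and let $F=\{C_1,\dots,C_q\}$ be a family of subsets of $S$ with $q\le p$ and $\bigcup_j C_j=S$. Construct the graph $G$ as follows: vertices $a_1,\dots,a_p$, $b_1,\dots,b_q$, $z_1,\dots,z_p$, $r_1,\dots,r_{p+1}$, $w$, $r'_{p+1}$; edges $a_ib_j$ whenever $s_i\in C_j$, $a_iz_i$ for all $i\in[p]$, $b_ir_j$ for all $i\in[q]$ and $j\in[p+1]$, and $r_{p+1}w$, $wr'_{p+1}$. Then $G$ is a comb-convex bipartite graph with parts $X=\{a_1,\dots,a_p,r_1,\dots,r_{p+1},r'_{p+1}\}$ and $Y=\{b_1,\dots,b_q,z_1,\dots,z_p,w\}$ (with respect to the comb on $X$ with backbone path $r_1r_2\cdots r_{p+1}$ and teeth $a_i$ attached to $r_i$ for $i\in[p]$ and $r'_{p+1}$ attached to $r_{p+1}$), and for every nonnegative integer $t$, $S$ has a cover of size at most $t$ if and only if $G$ has a vertex-edge dominating set of size at most $t+1$.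
   Context: A cover of $S$ in the set system $(S,F)$ is a subfamily $C\subseteq F$ whose union is $S$. A vertex-edge dominating set of a graph $G$ is a set $D\subseteq V(G)$ such that for every edge $uv$, $(N_G[u]\cup N_G[v])\cap D\neq\emptyset$, where $N_G[x]$ is the closed neighbourhood of $x$. A comb is a tree obtained from a path (the backbone) by attaching one pendant vertex (a tooth) to each vertex of the path. A bipartite graph $G=(X\cup Y,E)$ is comb-convex if there is a comb $T$ with vertex set $X$ such that for every $y\in Y$, $N_G(y)$ induces a subtree of $T$. *)

theory Defs
  imports Main
begin

definition closed_nbhd :: "'v set set \<Rightarrow> 'v \<Rightarrow> 'v set" where
  "closed_nbhd E x = {x} \<union> {y. {x, y} \<in> E}"

definition open_nbhd :: "'v set set \<Rightarrow> 'v \<Rightarrow> 'v set" where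
  "open_nbhd E x = {y. {x, y} \<in> E \<and> y \<noteq> x}"

definition vertex_edge_dominating :: "'v set \<Rightarrow> 'v set set \<Rightarrow> 'v set \<Rightarrow> bool" where
  "vertex_edge_dominating V E D \<longleftrightarrow> D \<subseteq> V \<and>
     (\<forall>u v. {u, v} \<in> E \<longrightarrow> (closed_nbhd E u \<union> closed_nbhd E v) \<inter> D \<noteq> {})"

definition bipartite_parts :: "'v set \<Rightarrow> 'v set set \<Rightarrow> 'v set \<Rightarrow> 'v set \<Rightarrow> bool" where
  "bipartite_parts V E X Y \<longleftrightarrow> X \<inter> Y = {} \<and> X \<union> Y = V \<and>
     (\<forall>e\<in>E. \<exists>x\<in>X. \<exists>y\<in>Y. e = {x, y})"

definition is_comb :: "'v set \<Rightarrow> 'v set set \<Rightarrow> bool" where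
  "is_comb VT ET \<longleftrightarrow> (\<exists>ps ts. ps \<noteq> [] \<and> length ts = length ps \<and> distinct (ps @ ts) \<and>
     VT = set ps \<union> set ts \<and>
     ET = {{ps ! i, ps ! (i + 1)} | i. i + 1 < length ps} \<union> {{ps ! i, ts ! i} | i. i < length ps})"

definition induces_subtree :: "'v set \<Rightarrow> 'v set set \<Rightarrow> 'v set \<Rightarrow> bool" where
  "induces_subtree VT ET U \<longleftrightarrow> U \<noteq> {} \<and> U \<subseteq> VT \<and>
     (\<forall>u\<in>U. \<forall>v\<in>U. (u, v) \<in> {(x, y). x \<in> U \<and> y \<in> U \<and> {x, y} \<in> ET}\<^sup>*)"

definition comb_convex_wrt :: "'v set set \<Rightarrow> 'v set \<Rightarrow> 'v set \<Rightarrow> 'v set set \<Rightarrow> bool" where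
  "comb_convex_wrt E X Y ET \<longleftrightarrow> is_comb X ET \<and> (\<forall>y\<in>Y. induces_subtree X ET (open_nbhd E y))"

definition comb_convex_bipartite :: "'v set \<Rightarrow> 'v set set \<Rightarrow> 'v set \<Rightarrow> 'v set \<Rightarrow> bool" where
  "comb_convex_bipartite V E X Y \<longleftrightarrow> bipartite_parts V E X Y \<and> (\<exists>ET. comb_convex_wrt E X Y ET)"

definition is_cover :: "'a set \<Rightarrow> 'a set set \<Rightarrow> 'a set set \<Rightarrow> bool" where
  "is_cover S F Cs \<longleftrightarrow> Cs \<subseteq> F \<and> \<Union>Cs = S"

section \<open>The construction (0-based indices: s_i = i for i < p, C j for j < q,
  r_1..r_{p+1} are R 0 .. R p)\<close>

datatype vtx = A nat | B nat | Z nat | R nat | W | R'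

definition GV :: "nat \<Rightarrow> nat \<Rightarrow> vtx set" where
  "GV p q = A ` {..<p} \<union> B ` {..<q} \<union> Z ` {..<p} \<union> R ` {..p} \<union> {W, R'}"

definition GE :: "nat \<Rightarrow> nat \<Rightarrow> (nat \<Rightarrow> nat set) \<Rightarrow> vtx set set" where
  "GE p q C = {{A i, B j} | i j. i < p \<and> j < q \<and> i \<in> C j}
            \<union> {{A i, Z i} | i. i < p}
            \<union> {{B i, R j} | i j. i < q \<and> j \<le> p}
            \<union> {{R p, W}, {W, R'}}"

definition GX :: "nat \<Rightarrow> vtx set" where
  "GX p = A ` {..<p} \<union> R ` {..p} \<union> {R'}"

definition GY :: "nat \<Rightarrow> nat \<Rightarrow> vtx set" where
  "GY p q = B ` {..<q} \<union> Z ` {..<p} \<union> {W}"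

definition comb_edges :: "nat \<Rightarrow> vtx set set" where
  "comb_edges p = {{R i, R (i + 1)} | i. i < p} \<union> {{R i, A i} | i. i < p} \<union> {{R p, R'}}"

end

theory Submission
  imports Defs
begin

text \<open>The edge \<open>W R'\<close> can only be dominated by one of \<open>W\<close>, \<open>R p\<close>, \<open>R'\<close>, which lie outside
  the \<open>A\<close>/\<open>B\<close>/\<open>Z\<close> part of the graph. The pendant edge \<open>A i Z i\<close> must be dominated by
  \<open>A i\<close>, \<open>Z i\<close> or some \<open>B j\<close> with \<open>i \<in> C j\<close>; trading each dominating \<open>A i\<close> or \<open>Z i\<close> for
  such a \<open>B j\<close> turns the remaining vertices into a cover with at most \<open>card D - 1\<close> sets.
  Conversely, the \<open>B j\<close> of a cover together with \<open>W\<close> dominate every edge, because every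
  \<open>A i\<close> is adjacent to a chosen \<open>B j\<close> and every \<open>R k\<close> is adjacent to all \<open>B j\<close> (or, for
  \<open>k = p\<close>, to \<open>W\<close>). Comb-convexity holds since \<open>N(B j)\<close> is the whole backbone plus some
  teeth, \<open>N(Z i)\<close> a single tooth and \<open>N(W)\<close> the last tooth edge.\<close>

lemma induces_subtreeI:
  assumes "c \<in> U" "U \<subseteq> VT"
    and reach: "\<And>u. u \<in> U \<Longrightarrow> (c, u) \<in> {(x, y). x \<in> U \<and> y \<in> U \<and> {x, y} \<in> ET}\<^sup>*"
  shows "induces_subtree VT ET U"
proof -
  let ?r = "{(x, y). x \<in> U \<and> y \<in> U \<and> {x, y} \<in> ET}"
  have "sym ?r" by (auto simp: sym_def insert_commute)
  then have "sym (?r\<^sup>*)" by (rule sym_rtrancl)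
  then have "(u, v) \<in> ?r\<^sup>*" if "u \<in> U" "v \<in> U" for u v
    using reach[OF that(1)] reach[OF that(2)] by (meson rtrancl_trans symD)
  with assms(1,2) show ?thesis unfolding induces_subtree_def by blast
qed

lemma induces_subtree_singleton: "u \<in> VT \<Longrightarrow> induces_subtree VT ET {u}"
  by (rule induces_subtreeI) auto

lemma induces_subtree_edge:
  assumes "{u, v} \<in> ET" "u \<in> VT" "v \<in> VT"
  shows "induces_subtree VT ET {u, v}"
  by (rule induces_subtreeI[of u]) (use assms in auto)

lemma closed_nbhd_memI: "{x, y} \<in> E \<Longrightarrow> y \<in> closed_nbhd E x"
  by (simp add: closed_nbhd_def)

lemma vertex_edge_dominatingI:
  assumes "D \<subseteq> V"
    and "\<And>u v. {u, v} \<in> E \<Longrightarrow> closed_nbhd E u \<inter> D \<noteq> {} \<or> closed_nbhd E v \<inter> D \<noteq> {}"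
  shows "vertex_edge_dominating V E D"
  using assms unfolding vertex_edge_dominating_def by blast

lemma ex_cover_of_image_iff:
  assumes "finite I"
  shows "(\<exists>Cs. is_cover S (C ` I) Cs \<and> card Cs \<le> t) \<longleftrightarrow> (\<exists>J\<subseteq>I. (\<Union>j\<in>J. C j) = S \<and> card J \<le> t)"
proof
  assume "\<exists>Cs. is_cover S (C ` I) Cs \<and> card Cs \<le> t"
  then obtain Cs where "Cs \<subseteq> C ` I" "\<Union>Cs = S" "card Cs \<le> t"
    unfolding is_cover_def by blast
  moreover from \<open>Cs \<subseteq> C ` I\<close> obtain J where "J \<subseteq> I" "inj_on C J" "Cs = C ` J"
    by (auto simp: subset_image_inj)
  ultimately show "\<exists>J\<subseteq>I. (\<Union>j\<in>J. C j) = S \<and> card J \<le> t"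
    by (metis card_image)
next
  assume "\<exists>J\<subseteq>I. (\<Union>j\<in>J. C j) = S \<and> card J \<le> t"
  then obtain J where "J \<subseteq> I" "(\<Union>j\<in>J. C j) = S" "card J \<le> t" by blast
  moreover have "card (C ` J) \<le> card J"
    using assms \<open>J \<subseteq> I\<close> by (meson card_image_le finite_subset)
  ultimately show "\<exists>Cs. is_cover S (C ` I) Cs \<and> card Cs \<le> t"
    unfolding is_cover_def by (intro exI[of _ "C ` J"]) auto
qed

lemma is_comb_comb_edges: "is_comb (GX p) (comb_edges p)"
  unfolding is_comb_def
proof (intro exI conjI)
  let ?ps = "map R [0..<p] @ [R p]" and ?ts = "map A [0..<p] @ [R']"
  show "?ps \<noteq> []" "length ?ts = length ?ps" by simp_all
  show "distinct (?ps @ ?ts)" by (auto simp: distinct_map inj_on_def)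
  show "GX p = set ?ps \<union> set ?ts" by (auto simp: GX_def)
  have ps: "?ps ! i = R i" if "i \<le> p" for i
    using that by (simp add: nth_append)
  have ts: "?ts ! i = (if i < p then A i else R')" if "i \<le> p" for i
    using that by (simp add: nth_append)
  have "{{?ps ! i, ?ps ! (i + 1)} | i. i + 1 < length ?ps} = (\<lambda>i. {?ps ! i, ?ps ! (i + 1)}) ` {..<p}"
    by auto
  also have "\<dots> = (\<lambda>i. {R i, R (i + 1)}) ` {..<p}"
    by (rule image_cong) (simp_all add: ps)
  finally have backbone: "{{?ps ! i, ?ps ! (i + 1)} | i. i + 1 < length ?ps} = (\<lambda>i. {R i, R (i + 1)}) ` {..<p}" .
  have "{{?ps ! i, ?ts ! i} | i. i < length ?ps} = (\<lambda>i. {?ps ! i, ?ts ! i}) ` {..p}"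
    by auto
  also have "\<dots> = (\<lambda>i. {R i, if i < p then A i else R'}) ` {..p}"
    by (rule image_cong) (simp_all add: ps ts)
  also have "\<dots> = (\<lambda>i. {R i, A i}) ` {..<p} \<union> {{R p, R'}}"
    unfolding lessThan_Suc_atMost[symmetric] lessThan_Suc by auto
  finally have teeth: "{{?ps ! i, ?ts ! i} | i. i < length ?ps} = (\<lambda>i. {R i, A i}) ` {..<p} \<union> {{R p, R'}}" .
  show "comb_edges p = {{?ps ! i, ?ps ! (i + 1)} | i. i + 1 < length ?ps}
      \<union> {{?ps ! i, ?ts ! i} | i. i < length ?ps}"
    unfolding backbone teeth comb_edges_def by auto
qed

lemma induces_subtree_backbone_with_teeth:
  assumes "I \<subseteq> {..<p}"
  shows "induces_subtree (GX p) (comb_edges p) (A ` I \<union> R ` {..p})"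
proof (rule induces_subtreeI)
  let ?U = "A ` I \<union> R ` {..p}"
  let ?r = "{(x, y). x \<in> ?U \<and> y \<in> ?U \<and> {x, y} \<in> comb_edges p}"
  have backbone: "(R 0, R k) \<in> ?r\<^sup>*" if "k \<le> p" for k
    using that
  proof (induction k)
    case (Suc k)
    then have "(R k, R (Suc k)) \<in> ?r" by (auto simp: comb_edges_def)
    with Suc show ?case by (meson Suc_leD rtrancl_into_rtrancl)
  qed simp
  show "(R 0, u) \<in> ?r\<^sup>*" if "u \<in> ?U" for u
  proof -
    from that consider k where "k \<in> I" "u = A k" | k where "k \<le> p" "u = R k" by auto
    then show ?thesis
    proof cases
      case (1 k)
      with assms have "k < p" by auto
      with 1 have "(R k, A k) \<in> ?r" by (auto simp: comb_edges_def)
      with backbone[of k] \<open>k < p\<close> 1 show ?thesis by (meson less_imp_le rtrancl_into_rtrancl)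
    qed (use backbone in simp)
  qed
qed (use assms in \<open>auto simp: GX_def\<close>)

lemma open_nbhd_B:
  assumes "i < q" "C i \<subseteq> {..<p}"
  shows "open_nbhd (GE p q C) (B i) = A ` C i \<union> R ` {..p}"
  using assms by (auto simp: open_nbhd_def GE_def doubleton_eq_iff)

lemma open_nbhd_Z: "i < p \<Longrightarrow> open_nbhd (GE p q C) (Z i) = {A i}"
  by (auto simp: open_nbhd_def GE_def doubleton_eq_iff)

lemma open_nbhd_W: "open_nbhd (GE p q C) W = {R p, R'}"
  by (auto simp: open_nbhd_def GE_def doubleton_eq_iff)

lemma bipartite_parts_GV: "bipartite_parts (GV p q) (GE p q C) (GX p) (GY p q)"
  unfolding bipartite_parts_def
proof (intro conjI ballI)
  show "GX p \<inter> GY p q = {}" "GX p \<union> GY p q = GV p q" by (auto simp: GX_def GY_def GV_def)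
  fix e assume "e \<in> GE p q C"
  then show "\<exists>x\<in>GX p. \<exists>y\<in>GY p q. e = {x, y}"
    unfolding GE_def GX_def GY_def by (auto simp: insert_commute)
qed

lemma comb_convex_wrt_comb_edges:
  assumes "\<forall>j<q. C j \<subseteq> {..<p}"
  shows "comb_convex_wrt (GE p q C) (GX p) (GY p q) (comb_edges p)"
  unfolding comb_convex_wrt_def
proof (intro conjI ballI is_comb_comb_edges)
  fix y assume "y \<in> GY p q"
  then consider i where "i < q" "y = B i" | i where "i < p" "y = Z i" | "y = W"
    by (auto simp: GY_def)
  then show "induces_subtree (GX p) (comb_edges p) (open_nbhd (GE p q C) y)"
  proof cases
    case (1 i)
    then show ?thesis
      using assms by (simp add: open_nbhd_B induces_subtree_backbone_with_teeth)
  next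
    case (2 i)
    then show ?thesis by (simp add: open_nbhd_Z induces_subtree_singleton GX_def)
  next
    case 3
    then show ?thesis
      by (simp add: open_nbhd_W induces_subtree_edge GX_def comb_edges_def)
  qed
qed

lemma A_B_edge: "i < p \<Longrightarrow> j < q \<Longrightarrow> i \<in> C j \<Longrightarrow> {A i, B j} \<in> GE p q C"
  unfolding GE_def by blast

lemma A_Z_edge: "i < p \<Longrightarrow> {A i, Z i} \<in> GE p q C"
  unfolding GE_def by blast

lemma R_B_edge: "k \<le> p \<Longrightarrow> j < q \<Longrightarrow> {R k, B j} \<in> GE p q C"
  unfolding GE_def by (auto simp: insert_commute)

lemma GE_edge_endpoint:
  assumes "{u, v} \<in> GE p q C"
  obtains x where "x \<in> {u, v}" "(\<exists>i<p. x = A i) \<or> (\<exists>k\<le>p. x = R k) \<or> x = W"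
  using assms unfolding GE_def by (auto simp: doubleton_eq_iff)

lemma vertex_edge_dominating_of_cover:
  assumes J: "J \<subseteq> {..<q}" and cover: "(\<Union>j\<in>J. C j) = {..<p}"
  shows "vertex_edge_dominating (GV p q) (GE p q C) (insert W (B ` J))"
proof -
  let ?E = "GE p q C" and ?D = "insert W (B ` J)"
  have endpoint_dom: "closed_nbhd ?E x \<inter> ?D \<noteq> {}"
    if "(\<exists>i<p. x = A i) \<or> (\<exists>k\<le>p. x = R k) \<or> x = W" for x
    using that
  proof (elim disjE exE conjE)
    fix i assume "i < p" "x = A i"
    with cover obtain j where "j \<in> J" "i \<in> C j" by blast
    with J \<open>i < p\<close> have "B j \<in> closed_nbhd ?E (A i)" by (auto intro: closed_nbhd_memI A_B_edge)
    with \<open>j \<in> J\<close> \<open>x = A i\<close> show ?thesis by blast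
  next
    fix k assume "k \<le> p" "x = R k"
    show ?thesis
    proof (cases "k = p")
      case True
      have "{R p, W} \<in> ?E" by (simp add: GE_def)
      with True \<open>x = R k\<close> show ?thesis by (blast dest: closed_nbhd_memI)
    next
      case False
      with \<open>k \<le> p\<close> cover have "0 \<in> (\<Union>j\<in>J. C j)" by simp
      then obtain j where "j \<in> J" "0 \<in> C j" by blast
      with J \<open>k \<le> p\<close> have "B j \<in> closed_nbhd ?E (R k)" by (auto intro: closed_nbhd_memI R_B_edge)
      with \<open>j \<in> J\<close> \<open>x = R k\<close> show ?thesis by blast
    qed
  next
    assume "x = W"
    then show ?thesis by (simp add: closed_nbhd_def)
  qed
  show ?thesis
  proof (rule vertex_edge_dominatingI)
    show "?D \<subseteq> GV p q" using J by (auto simp: GV_def)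
    fix u v assume "{u, v} \<in> ?E"
    then obtain x where "x \<in> {u, v}" "(\<exists>i<p. x = A i) \<or> (\<exists>k\<le>p. x = R k) \<or> x = W"
      by (rule GE_edge_endpoint)
    with endpoint_dom show "closed_nbhd ?E u \<inter> ?D \<noteq> {} \<or> closed_nbhd ?E v \<inter> ?D \<noteq> {}"
      by blast
  qed
qed

lemma cover_of_vertex_edge_dominating:
  assumes union: "(\<Union>j<q. C j) = {..<p}"
    and D: "vertex_edge_dominating (GV p q) (GE p q C) D"
  shows "\<exists>J\<subseteq>{..<q}. (\<Union>j\<in>J. C j) = {..<p} \<and> card J < card D"
proof -
  let ?E = "GE p q C" and ?H = "A ` {..<p} \<union> B ` {..<q} \<union> Z ` {..<p}"
  have dom: "(closed_nbhd ?E u \<union> closed_nbhd ?E v) \<inter> D \<noteq> {}" if "{u, v} \<in> ?E" for u v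
    using D that unfolding vertex_edge_dominating_def by blast
  have "finite D"
    using D unfolding vertex_edge_dominating_def GV_def by (auto intro: finite_subset)
  have "\<forall>i<p. \<exists>j<q. i \<in> C j" using union by blast
  then obtain pick where pick: "pick i < q" "i \<in> C (pick i)" if "i < p" for i by metis
  define index where
    "index v = (case v of A i \<Rightarrow> pick i | Z i \<Rightarrow> pick i | B j \<Rightarrow> j | _ \<Rightarrow> 0)" for v
  define J where "J = index ` (D \<inter> ?H)"
  have "J \<subseteq> {..<q}" using pick by (auto simp: J_def index_def)
  have "{W, R'} \<in> ?E" by (simp add: GE_def)
  moreover have "closed_nbhd ?E W \<union> closed_nbhd ?E R' \<subseteq> {W, R p, R'}"
    by (auto simp: closed_nbhd_def GE_def doubleton_eq_iff)
  ultimately obtain x where "x \<in> D" "x \<in> {W, R p, R'}"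
    using dom by blast
  then have "D \<inter> ?H \<subset> D" by auto
  with \<open>finite D\<close> have "card J < card D"
    unfolding J_def by (meson card_image_le finite_Int le_less_trans psubset_card_mono)
  have "i \<in> (\<Union>j\<in>J. C j)" if "i < p" for i
  proof -
    from that have "{A i, Z i} \<in> ?E" by (rule A_Z_edge)
    moreover have "closed_nbhd ?E (A i) \<union> closed_nbhd ?E (Z i) \<subseteq> {A i, Z i} \<union> B ` {j. j < q \<and> i \<in> C j}"
      using that by (auto simp: closed_nbhd_def GE_def doubleton_eq_iff)
    ultimately obtain d where "d \<in> D" "d \<in> {A i, Z i} \<union> B ` {j. j < q \<and> i \<in> C j}"
      using dom by blast
    with that pick show ?thesis by (force simp: J_def index_def)
  qed
  with union \<open>J \<subseteq> {..<q}\<close> have "(\<Union>j\<in>J. C j) = {..<p}" by blast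
  with \<open>J \<subseteq> {..<q}\<close> \<open>card J < card D\<close> show ?thesis by blast
qed

lemma ex_index_cover_iff_ex_vertex_edge_dominating:
  assumes union: "(\<Union>j<q. C j) = {..<p}"
  shows "(\<exists>J\<subseteq>{..<q}. (\<Union>j\<in>J. C j) = {..<p} \<and> card J \<le> t)
    \<longleftrightarrow> (\<exists>D. vertex_edge_dominating (GV p q) (GE p q C) D \<and> card D \<le> t + 1)"
proof
  assume "\<exists>J\<subseteq>{..<q}. (\<Union>j\<in>J. C j) = {..<p} \<and> card J \<le> t"
  then obtain J where J: "J \<subseteq> {..<q}" "(\<Union>j\<in>J. C j) = {..<p}" "card J \<le> t" by blast
  then have "finite J" by (meson finite_lessThan finite_subset)
  then have "card (insert W (B ` J)) \<le> card J + 1"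
    using card_image_le[of J B] by (simp add: card_insert_if)
  with J vertex_edge_dominating_of_cover[OF J(1,2)]
  show "\<exists>D. vertex_edge_dominating (GV p q) (GE p q C) D \<and> card D \<le> t + 1"
    by (intro exI[of _ "insert W (B ` J)"]) simp
next
  assume "\<exists>D. vertex_edge_dominating (GV p q) (GE p q C) D \<and> card D \<le> t + 1"
  then obtain D where D: "vertex_edge_dominating (GV p q) (GE p q C) D" "card D \<le> t + 1" by blast
  from cover_of_vertex_edge_dominating[OF union D(1)]
  obtain J where "J \<subseteq> {..<q}" "(\<Union>j\<in>J. C j) = {..<p}" "card J < card D" by blast
  with D(2) show "\<exists>J\<subseteq>{..<q}. (\<Union>j\<in>J. C j) = {..<p} \<and> card J \<le> t"
    by (intro exI[of _ J]) simp
qed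

theorem lemma4:
  fixes p q :: nat and C :: "nat \<Rightarrow> nat set"
  assumes subsets: "\<forall>j<q. C j \<subseteq> {..<p}"
    and qp: "q \<le> p"
    and union: "(\<Union>j<q. C j) = {..<p}"
  shows "bipartite_parts (GV p q) (GE p q C) (GX p) (GY p q)
       \<and> comb_convex_wrt (GE p q C) (GX p) (GY p q) (comb_edges p)
       \<and> comb_convex_bipartite (GV p q) (GE p q C) (GX p) (GY p q)
       \<and> (\<forall>t::nat.
            (\<exists>Cs. is_cover {..<p} (C ` {..<q}) Cs \<and> card Cs \<le> t)
            \<longleftrightarrow> (\<exists>D. vertex_edge_dominating (GV p q) (GE p q C) D \<and> card D \<le> t + 1))"
proof (intro conjI allI)
  show bip: "bipartite_parts (GV p q) (GE p q C) (GX p) (GY p q)"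
    by (rule bipartite_parts_GV)
  show convex: "comb_convex_wrt (GE p q C) (GX p) (GY p q) (comb_edges p)"
    using subsets by (rule comb_convex_wrt_comb_edges)
  from bip convex show "comb_convex_bipartite (GV p q) (GE p q C) (GX p) (GY p q)"
    unfolding comb_convex_bipartite_def by blast
  fix t :: nat
  have "(\<exists>Cs. is_cover {..<p} (C ` {..<q}) Cs \<and> card Cs \<le> t)
      \<longleftrightarrow> (\<exists>J\<subseteq>{..<q}. (\<Union>j\<in>J. C j) = {..<p} \<and> card J \<le> t)"
    by (rule ex_cover_of_image_iff) simp
  also have "\<dots> \<longleftrightarrow> (\<exists>D. vertex_edge_dominating (GV p q) (GE p q C) D \<and> card D \<le> t + 1)"
    using union by (rule ex_index_cover_iff_ex_vertex_edge_dominating)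
  finally show "(\<exists>Cs. is_cover {..<p} (C ` {..<q}) Cs \<and> card Cs \<le> t)
      \<longleftrightarrow> (\<exists>D. vertex_edge_dominating (GV p q) (GE p q C) D \<and> card D \<le> t + 1)" .
qed

end
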